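(* For each $k\ge0$ and each index $\alpha$, let $$\mathcal G_{k,\alpha}:=\Big\langle\mathcal O^{(k)}_\alpha\exp\Big(\sum_\beta\lambda^\beta_0\mathcal O_\beta\Big)\Big\rangle_0\in\mathbb C[[\lambda^\alpha_0]].$$ Then the current observables $\oint_C\mathscr J^{(1)}_{\mathcal G_{k,\alpha}}$ mutually commute with respect to $\{-,-\}_C$: $$\Big\{\oint_C\mathscr J^{(1)}_{\mathcal G_{k,\alpha}},\oint_C\mathscr J^{(1)}_{\mathcal G_{m,\beta}}\Big\}_C=0\quad\text{for all }k,m\ge0\text{ and all }\alpha,\beta.$$
   Context: Genus zero data: $H$ finite-dimensional purely even complex vector space with basis $\{\mathcal O_\alpha\}$, distinguished $P=\mathcal O_1$, $\mathcal O^{(k)}_\alpha=t^k\mathcal O_\alpha$ ($t$ formal); symmetric multilinear genus zero correlators $\langle\mathcal O^{(k_1)}_{\alpha_1}\cdots\mathcal O^{(k_n)}_{\alpha_n}\rangle_0\in\mathbb C$ vanishing for $n<3$, with $g_{\alpha\beta}=\langle\mathcal O_\alpha\mathcal O_\beta P\rangle_0$ nondegenerate (inverse $g^{\alpha\beta}$, used to raise indices: $\mathcal O^{(k)\alpha}=\sum_\beta g^{\alpha\beta}\mathcal O^{(k)}_\beta$), satisfying the genus zero topological recursion relation $\langle\langle\mathcal O^{(i+1)}_\alpha\mathcal O^{(j)}_\beta\mathcal O^{(k)}_\gamma\rangle\rangle_0=\sum_\sigma\langle\langle\mathcal O^{(i)}_\alpha\mathcal O^{(0)\sigma}\rangle\rangle_0\langle\langle\mathcal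 O^{(0)}_\sigma\mathcal O^{(j)}_\beta\mathcal O^{(k)}_\gamma\rangle\rangle_0$, where $\langle\langle\cdots\rangle\rangle_0(\mathbf b)=\langle\cdots e^{\sum b^\alpha_k\mathcal O^{(k)}_\alpha}\rangle_0$ is a formal power series in coordinates $b^\alpha_k$. In $\mathcal G_{k,\alpha}$ the exponential is expanded and the correlator applied multilinearly. Setting on $\mathbb C^\times=\mathbb C/(z\sim z+1)$ with form $dz$: fields $\mathcal E^H=(\mathrm{PV}(\mathbb C^\times)\otimes H)[[t]]$ ($t$ of degree 2, $\mathrm{PV}^{i,j}=\Omega^{0,j}(\wedge^iT^{1,0})$ in degree $i+j$), $\mu=\sum(\lambda^\alpha_k\otimes\mathcal O_\alpha t^k+\rho^\alpha_k\partial_z\otimes\mathcal O_\alpha t^k)$, $\lambda^\alpha_k,\rho^\alpha_k\in\Omega^{0,\bullet}(\mathbb C^\times)$. Trace $\mathrm{Tr}(\mu)=\int(\mu\vdash dz)\wedge dz$; BV kernel $K_0=\sum_\alpha(\mathcal O^\alpha\otimes\mathcal O_\alpha)\partial_z\delta(z-w)(d\bar z-d\bar w)$. $\mathbb C[[\partial_z^m\lambda^\alpha_k,\partial_z^m\rho^\alpha_k]]$: formal power series in even $\partial_z^m\lambda^\alpha_k$ and odd $\partial_z^m\rho^\alpha_k$, with derivation $\partial_z$ raising $m$. For such $\mathcal L$, $\mathscr J_{\mathcal L}=dz\,\mathcal L(\partial_z^m\lambda^\alpha_k,\partial_z^m\rho^\alpha_k)$ (an $\Omega^{\bullet,\bullet}(\mathbb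 C^\times)$-valued function on fields obtained by substitution), with 1-form and 2-form parts $\mathscr J^{(1)}_{\mathcal L},\mathscr J^{(2)}_{\mathcal L}$; $C=\{z\in[0,1]\}$. The bracket is $\{\oint_C\mathscr J^{(1)}_{\mathcal L_1},\oint_C\mathscr J^{(1)}_{\mathcal L_2}\}_C:=\{\int_{\mathbb C^\times}\mathscr J^{(2)}_{\mathcal L_1},\oint_C\mathscr J^{(1)}_{\mathcal L_2}\}_{BV}$, where $\{S,\mathcal O\}_{BV}$ is the derivative of the observable $\mathcal O$ along the field transformation obtained by contracting $K_0$ with the functional derivative of the local functional $S$; concretely it equals $\oint_C\mathscr J^{(1)}_{[\mathcal L_1,\mathcal L_2]}$ with $[\mathcal L_1,\mathcal L_2]=\sum_{\alpha,\beta,k,m}\{(-\partial_z)^k\frac{\partial\mathcal L_1}{\partial(\partial_z^k\lambda^\alpha_0)}\}g^{\alpha\beta}\partial_z\{(-\partial_z)^m\frac{\partial\mathcal L_2}{\partial(\partial_z^m\lambda^\beta_0)}\}$. *)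

theory Defs
  imports "HOL-Analysis.Analysis" "HOL-Library.Multiset"
begin

text \<open>The index set of the basis O_alpha of H is a finite type 'i.
  A basis insertion O_alpha^(k) is the pair (alpha, k). By symmetry and multilinearity,
  the genus zero correlators are determined by their values on multisets of basis
  insertions: corr X = < prod_{(alpha,k) in X} O_alpha^(k) >_0.\<close>

definition mfact :: "'a multiset \<Rightarrow> complex" where
  "mfact M = (\<Prod>x\<in>set_mset M. of_nat (fact (count M x)))"

text \<open>Formal power series in commuting variables indexed by 'a, represented by
  their coefficient functions on monomials (monomials = finite multisets of variables).\<close>

definition pmul :: "('a multiset \<Rightarrow> complex) \<Rightarrow> ('a multiset \<Rightarrow> complex) \<Rightarrow> 'a multiset \<Rightarrow> complex" where
  "pmul F G M = (\<Sum>N\<in>{N. N \<subseteq># M}. F N * G (M - N))"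

text \<open>Generating series << X >>_0 (b) in the coordinates b^alpha_k:
  coefficient of b^M is corr (X + M) / M!.\<close>

definition gen :: "(('i \<times> nat) multiset \<Rightarrow> complex) \<Rightarrow> ('i \<times> nat) multiset
                     \<Rightarrow> ('i \<times> nat) multiset \<Rightarrow> complex" where
  "gen corr X M = corr (X + M) / mfact M"

definition metric :: "(('i::finite \<times> nat) multiset \<Rightarrow> complex) \<Rightarrow> 'i \<Rightarrow> complex^'i^'i" where
  "metric corr P = (\<chi> a b. corr {#(a,0), (b,0), (P,0)#})"

definition metric_inv :: "(('i::finite \<times> nat) multiset \<Rightarrow> complex) \<Rightarrow> 'i \<Rightarrow> complex^'i^'i" where
  "metric_inv corr P = matrix_inv (metric corr P)"

definition TRR :: "(('i::finite \<times> nat) multiset \<Rightarrow> complex) \<Rightarrow> 'i \<Rightarrow> bool" where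
  "TRR corr P \<longleftrightarrow>
    (\<forall>a b c i j k M.
       gen corr {#(a, Suc i), (b, j), (c, k)#} M =
       (\<Sum>s\<in>UNIV. \<Sum>t\<in>UNIV. metric_inv corr P $ s $ t *
           pmul (gen corr {#(a, i), (t, 0)#}) (gen corr {#(s, 0), (b, j), (c, k)#}) M))"

text \<open>Jet variables: (m, alpha, k) stands for the even variable d_z^m lambda^alpha_k.
  A jet series is a formal power series in these variables.\<close>

type_synonym 'i jetser = "(nat \<times> 'i \<times> nat) multiset \<Rightarrow> complex"

definition wt :: "(nat \<times> 'i \<times> nat) multiset \<Rightarrow> nat" where
  "wt M = sum_mset (image_mset fst M)"

text \<open>The total derivative d_z: the derivation sending d_z^m lambda^alpha_k to
  d_z^(m+1) lambda^alpha_k, given by its coefficients.\<close>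
definition Dz :: "'i jetser \<Rightarrow> 'i jetser" where
  "Dz F M = (\<Sum>w\<in>{w\<in>set_mset M. 0 < fst w}.
      let v = (fst w - 1, snd w); N = add_mset v (M - {#w#})
      in of_nat (count N v) * F N)"

definition pd :: "(nat \<times> 'i \<times> nat) \<Rightarrow> 'i jetser \<Rightarrow> 'i jetser" where
  "pd v F M = of_nat (count M v + 1) * F (add_mset v M)"

definition negDz :: "nat \<Rightarrow> 'i jetser \<Rightarrow> 'i jetser" where
  "negDz n F = ((\<lambda>G M. - Dz G M) ^^ n) F"

text \<open>The sum over k, m is locally finite:
   at a monomial M only terms with k, m <= wt M contribute (d_z raises weight by one),
   so the truncation below is exact.\<close>
definition cbracket :: "complex^'i^'i \<Rightarrow> 'i::finite jetser \<Rightarrow> 'i jetser \<Rightarrow> 'i jetser" where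
  "cbracket gi L1 L2 M =
     (\<Sum>k\<in>{..wt M}. \<Sum>m\<in>{..wt M}. \<Sum>a\<in>UNIV. \<Sum>b\<in>UNIV.
        gi $ a $ b * pmul (negDz k (pd (k, a, 0) L1)) (Dz (negDz m (pd (m, b, 0) L2))) M)"

text \<open>G_{k,alpha} = < O_alpha^(k) exp(sum_beta lambda^beta_0 O_beta) >_0 as a jet series
  depending only on the variables lambda^beta_0 = (0, beta, 0).\<close>
definition Gser :: "(('i \<times> nat) multiset \<Rightarrow> complex) \<Rightarrow> nat \<Rightarrow> 'i \<Rightarrow> 'i jetser" where
  "Gser corr k a M =
     (if \<forall>x\<in>#M. fst x = 0 \<and> snd (snd x) = 0
      then corr (add_mset (a, k) (image_mset (\<lambda>x. (fst (snd x), 0)) M)) / mfact M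
      else 0)"

text \<open>The current observable (contour integral over C of J^(1)_L) vanishes:
  L is a total z-derivative (local functionals modulo total derivatives).\<close>
definition current_vanishes :: "'i jetser \<Rightarrow> bool" where
  "current_vanishes L \<longleftrightarrow> (\<exists>H. L = Dz H)"

end

theory Submission
  imports Defs
begin

text \<open>Each G_{k,a} depends only on the variables lambda_0, so in the bracket [G_{k,a}, G_{m,b}]
  only the terms without (-d_z) survive, and the chain rule
  d_z F(lambda_0) = sum_c lambda^c_1 (dF/dlambda^c_0)(lambda_0) turns it into
  sum_c lambda^c_1 sum_{s,t} g^{st} <<O_a^(k) O_s>>_0 <<O_t O_b^(m) O_c>>_0.
  By the topological recursion relation and the symmetry of g^{-1} the inner sum is
  <<O_a^(k+1) O_b^(m) O_c>>_0, so the bracket is the total derivative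
  d_z <<O_a^(k+1) O_b^(m)>>_0(lambda_0), whose current vanishes.\<close>

lemma finite_submultisets: "finite {N. N \<subseteq># M}"
proof (rule finite_subset)
  show "{N. N \<subseteq># M} \<subseteq> mset ` {xs. set xs \<subseteq> set_mset M \<and> length xs \<le> size M}"
  proof
    fix N assume "N \<in> {N. N \<subseteq># M}"
    then have N: "N \<subseteq># M" by simp
    obtain xs where xs: "mset xs = N" using ex_mset by blast
    have "set xs \<subseteq> set_mset M" using N xs by (auto dest: mset_subset_eqD)
    moreover have "length xs \<le> size M" using N xs by (metis size_mset size_mset_mono)
    ultimately show "N \<in> mset ` {xs. set xs \<subseteq> set_mset M \<and> length xs \<le> size M}"
      using xs by blast
  qed
  show "finite (mset ` {xs. set xs \<subseteq> set_mset M \<and> length xs \<le> size M})"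
    by (intro finite_imageI finite_lists_length_le) simp
qed

lemma sum_atMost_eq_first: "(\<And>j. f (Suc j) = 0) \<Longrightarrow> sum f {..n::nat} = f 0"
  by (induction n) auto

lemma mfact_eq_prod_superset:
  "finite A \<Longrightarrow> set_mset M \<subseteq> A \<Longrightarrow> mfact M = (\<Prod>x\<in>A. of_nat (fact (count M x)))"
  unfolding mfact_def by (rule prod.mono_neutral_left) (auto simp: not_in_iff)

lemma mfact_add_mset: "mfact (add_mset x M) = of_nat (count M x + 1) * mfact M"
proof -
  let ?A = "insert x (set_mset M)"
  let ?rest = "\<Prod>y\<in>?A - {x}. (of_nat (fact (count M y)) :: complex)"
  have "mfact (add_mset x M) = (\<Prod>y\<in>?A. of_nat (fact (count (add_mset x M) y)))"
    by (rule mfact_eq_prod_superset) auto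
  also have "\<dots> = of_nat (count M x + 1) * of_nat (fact (count M x)) *
      (\<Prod>y\<in>?A - {x}. of_nat (fact (count (add_mset x M) y)))"
    by (simp add: prod.remove[of _ x] algebra_simps)
  also have "(\<Prod>y\<in>?A - {x}. of_nat (fact (count (add_mset x M) y))) = ?rest"
    by (rule prod.cong) auto
  finally have "mfact (add_mset x M) = of_nat (count M x + 1) * of_nat (fact (count M x)) * ?rest" .
  moreover have "mfact M = of_nat (fact (count M x)) * ?rest"
    by (subst mfact_eq_prod_superset[of ?A]) (auto simp: prod.remove[of _ x])
  ultimately show ?thesis by (simp only: mult.assoc)
qed

definition lambda0_monomial :: "(nat \<times> 'i \<times> nat) multiset \<Rightarrow> bool" where
  "lambda0_monomial M \<longleftrightarrow> (\<forall>x\<in>#M. fst x = 0 \<and> snd (snd x) = 0)"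

definition lambda0_insertion :: "nat \<times> 'i \<times> nat \<Rightarrow> 'i \<times> nat" where
  "lambda0_insertion x = (fst (snd x), 0)"

text \<open>The jet series S(lambda_0) obtained from a series S in the coordinates b by substituting
  b^c_0 := lambda^c_0 and b^c_k := 0 for k > 0.\<close>

definition lambda0_series :: "(('i \<times> nat) multiset \<Rightarrow> complex) \<Rightarrow> 'i jetser" where
  "lambda0_series S M =
     (if lambda0_monomial M then S (image_mset lambda0_insertion M) else 0)"

definition lambda1_monomial :: "(nat \<times> 'i \<times> nat) multiset \<Rightarrow> 'i \<Rightarrow> bool" where
  "lambda1_monomial M c \<longleftrightarrow> (Suc 0, c, 0) \<in># M \<and> lambda0_monomial (M - {#(Suc 0, c, 0)#})"

text \<open>The jet series sum_c lambda^c_1 T_c(lambda_0).\<close>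

definition lambda1_series :: "('i \<Rightarrow> ('i \<times> nat) multiset \<Rightarrow> complex) \<Rightarrow> 'i jetser" where
  "lambda1_series T M =
     (if \<exists>c. lambda1_monomial M c
      then let c = SOME c. lambda1_monomial M c
           in T c (image_mset lambda0_insertion (M - {#(Suc 0, c, 0)#}))
      else 0)"

definition pdb0 :: "'i \<Rightarrow> (('i \<times> nat) multiset \<Rightarrow> complex) \<Rightarrow> ('i \<times> nat) multiset \<Rightarrow> complex" where
  "pdb0 c S K = of_nat (count K (c, 0) + 1) * S (add_mset (c, 0) K)"

lemma lambda0_monomial_add_mset [simp]:
  "lambda0_monomial (add_mset x M) \<longleftrightarrow> fst x = 0 \<and> snd (snd x) = 0 \<and> lambda0_monomial M"
  by (auto simp: lambda0_monomial_def)

lemma lambda0_monomial_union [simp]: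
  "lambda0_monomial (M + N) \<longleftrightarrow> lambda0_monomial M \<and> lambda0_monomial N"
  by (auto simp: lambda0_monomial_def)

lemma lambda0_monomial_subset: "lambda0_monomial M \<Longrightarrow> N \<subseteq># M \<Longrightarrow> lambda0_monomial N"
  by (auto simp: lambda0_monomial_def dest: mset_subset_eqD)

lemma count_image_lambda0_insertion:
  "lambda0_monomial M \<Longrightarrow> count (image_mset lambda0_insertion M) (c, 0) = count M (0, c, 0)"
  by (induction M) (auto simp: lambda0_insertion_def)

lemma mfact_image_lambda0_insertion:
  "lambda0_monomial M \<Longrightarrow> mfact (image_mset lambda0_insertion M) = mfact M"
proof (induction M)
  case empty
  then show ?case by (simp add: mfact_def)
next
  case (add x M)
  then obtain c where x: "x = (0, c, 0)" and M: "lambda0_monomial M"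
    by (metis lambda0_monomial_add_mset prod.collapse)
  have "image_mset lambda0_insertion (add_mset x M) = add_mset (c, 0) (image_mset lambda0_insertion M)"
    by (simp add: x lambda0_insertion_def)
  then show ?case
    using add.IH M by (simp add: x mfact_add_mset count_image_lambda0_insertion)
qed

lemma bij_betw_image_lambda0_insertion:
  fixes M :: "(nat \<times> 'i \<times> nat) multiset"
  assumes "lambda0_monomial M"
  shows "bij_betw (image_mset lambda0_insertion) {N. N \<subseteq># M}
           {K. K \<subseteq># image_mset lambda0_insertion M}"
proof -
  define g :: "'i \<times> nat \<Rightarrow> nat \<times> 'i \<times> nat" where "g y = (0, fst y, 0)" for y
  have inverse: "image_mset g (image_mset lambda0_insertion N) = N" if "lambda0_monomial N" for N
    using that by (induction N) (auto simp: g_def lambda0_insertion_def prod_eq_iff)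
  show ?thesis
  proof (rule bij_betw_byWitness[where f' = "image_mset g"])
    show "\<forall>N\<in>{N. N \<subseteq># M}. image_mset g (image_mset lambda0_insertion N) = N"
      by (simp add: inverse lambda0_monomial_subset[OF assms])
    show "\<forall>K\<in>{K. K \<subseteq># image_mset lambda0_insertion M}.
            image_mset lambda0_insertion (image_mset g K) = K"
    proof
      fix K assume "K \<in> {K. K \<subseteq># image_mset lambda0_insertion M}"
      then have "\<forall>y\<in>#K. snd y = 0"
        by (auto simp: lambda0_insertion_def dest: mset_subset_eqD)
      then show "image_mset lambda0_insertion (image_mset g K) = K"
        by (induction K) (auto simp: g_def lambda0_insertion_def)
    qed
    show "image_mset lambda0_insertion ` {N. N \<subseteq># M} \<subseteq> {K. K \<subseteq># image_mset lambda0_insertion M}"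
      by (auto intro: image_mset_subseteq_mono)
    show "image_mset g ` {K. K \<subseteq># image_mset lambda0_insertion M} \<subseteq> {N. N \<subseteq># M}"
      using image_mset_subseteq_mono[of _ _ g] inverse[OF assms] by fastforce
  qed
qed

lemma lambda1_monomial_unique:
  assumes "lambda1_monomial M c" "lambda1_monomial M d"
  shows "c = d"
proof (rule ccontr)
  assume "c \<noteq> d"
  then have "(Suc 0, d, 0) \<in># M - {#(Suc 0, c, 0)#}"
    using assms(2) by (simp add: lambda1_monomial_def in_diff_count)
  moreover have "lambda0_monomial (M - {#(Suc 0, c, 0)#})"
    using assms(1) by (simp add: lambda1_monomial_def)
  ultimately show False
    unfolding lambda0_monomial_def by fastforce
qed

lemma lambda1_series_add_mset [simp]:
  "lambda0_monomial M \<Longrightarrow> lambda1_series T (add_mset (Suc 0, c, 0) M) = T c (image_mset lambda0_insertion M)"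
proof -
  assume M: "lambda0_monomial M"
  then have c: "lambda1_monomial (add_mset (Suc 0, c, 0) M) c"
    by (simp add: lambda1_monomial_def)
  then have "(SOME d. lambda1_monomial (add_mset (Suc 0, c, 0) M) d) = c"
    by (metis lambda1_monomial_unique someI)
  then show ?thesis
    using c by (auto simp: lambda1_series_def)
qed

lemma lambda1_series_eq_0: "\<nexists>c. lambda1_monomial M c \<Longrightarrow> lambda1_series T M = 0"
  by (simp add: lambda1_series_def)

lemma lambda1_monomialE:
  assumes "lambda1_monomial M c"
  obtains M0 where "M = add_mset (Suc 0, c, 0) M0" "lambda0_monomial M0"
  using assms by (metis insert_DiffM lambda1_monomial_def)

lemma lambda1_series_cases:
  obtains (lambda1) c M0 where "M = add_mset (Suc 0, c, 0) M0" "lambda0_monomial M0"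
  | (other) "\<And>c M0. M = add_mset (Suc 0, c, 0) M0 \<Longrightarrow> \<not> lambda0_monomial M0"
      "\<And>T. lambda1_series T M = 0"
proof (cases "\<exists>c. lambda1_monomial M c")
  case True
  then obtain c where "lambda1_monomial M c" ..
  then obtain M0 where "M = add_mset (Suc 0, c, 0) M0" "lambda0_monomial M0"
    by (rule lambda1_monomialE)
  then show thesis
    by (rule lambda1)
next
  case False
  show thesis
  proof (rule other)
    show "\<not> lambda0_monomial M0" if "M = add_mset (Suc 0, c, 0) M0" for c M0
      using False that by (auto simp: lambda1_monomial_def)
    show "lambda1_series T M = 0" for T
      using False by (rule lambda1_series_eq_0)
  qed
qed

lemma sum_lambda1_series:
  "(\<Sum>i\<in>I. lambda1_series (T i) M) = lambda1_series (\<lambda>c K. \<Sum>i\<in>I. T i c K) M"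
  by (cases M rule: lambda1_series_cases) simp_all

lemma mult_lambda1_series:
  "w * lambda1_series T M = lambda1_series (\<lambda>c K. w * T c K) M"
proof (cases M rule: lambda1_series_cases)
  case (lambda1 c M0)
  then show ?thesis by simp
next
  case other
  then show ?thesis by simp
qed

lemma Dz_zero [simp]: "Dz (\<lambda>_. 0) = (\<lambda>_. 0)"
  by (simp add: Dz_def Let_def fun_eq_iff)

lemma negDz_zero [simp]: "negDz n (\<lambda>_. 0) = (\<lambda>_. 0)"
  by (induction n) (simp_all add: negDz_def)

lemma negDz_0 [simp]: "negDz 0 F = F"
  by (simp add: negDz_def)

lemma pmul_zero_left [simp]: "pmul (\<lambda>_. 0) G = (\<lambda>_. 0)"
  by (simp add: pmul_def fun_eq_iff)

lemma pmul_zero_right [simp]: "pmul F (\<lambda>_. 0) = (\<lambda>_. 0)"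
  by (simp add: pmul_def fun_eq_iff)

lemma pdb0_gen:
  fixes corr :: "('i \<times> nat) multiset \<Rightarrow> complex"
  shows "pdb0 c (gen corr X) = gen corr (add_mset (c, 0) X)"
proof
  fix K :: "('i \<times> nat) multiset"
  have "(of_nat (count K (c, 0) + 1) :: complex) \<noteq> 0"
    by (metis of_nat_eq_0_iff add_is_0 one_neq_zero)
  then show "pdb0 c (gen corr X) K = gen corr (add_mset (c, 0) X) K"
    by (simp add: pdb0_def gen_def mfact_add_mset)
qed

lemma Gser_eq_lambda0_series: "Gser corr k a = lambda0_series (gen corr {#(a, k)#})"
proof
  fix M
  have "Gser corr k a M =
      (if lambda0_monomial M then corr (add_mset (a, k) (image_mset lambda0_insertion M)) / mfact M
       else 0)"
    by (simp add: Gser_def lambda0_monomial_def lambda0_insertion_def[abs_def])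
  then show "Gser corr k a M = lambda0_series (gen corr {#(a, k)#}) M"
    by (simp add: lambda0_series_def gen_def mfact_image_lambda0_insertion)
qed

lemma pd_lambda0_series: "pd (0, c, 0) (lambda0_series S) = lambda0_series (pdb0 c S)"
  by (auto simp: pd_def pdb0_def lambda0_series_def count_image_lambda0_insertion lambda0_insertion_def)

lemma pd_Suc_lambda0_series: "pd (Suc j, c, 0) (lambda0_series S) = (\<lambda>_. 0)"
  by (auto simp: pd_def lambda0_series_def)

lemma Dz_lambda0_series: "Dz (lambda0_series S) = lambda1_series (\<lambda>c. pdb0 c S)"
proof
  fix M
  show "Dz (lambda0_series S) M = lambda1_series (\<lambda>c. pdb0 c S) M"
  proof (cases M rule: lambda1_series_cases)
    case (lambda1 c M0)
    then have "{w \<in> set_mset M. 0 < fst w} = {(Suc 0, c, 0)}"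
      by (auto simp: lambda0_monomial_def)
    then show ?thesis
      using lambda1 by (simp add: Dz_def pdb0_def lambda0_series_def
          count_image_lambda0_insertion lambda0_insertion_def)
  next
    case other
    have "Dz (lambda0_series S) M = 0"
      unfolding Dz_def Let_def
    proof (intro sum.neutral ballI, goal_cases)
      case (1 w)
      then have w: "w \<in># M" "0 < fst w"
        by auto
      have "\<not> lambda0_monomial (add_mset (fst w - 1, snd w) (M - {#w#}))"
      proof
        assume "lambda0_monomial (add_mset (fst w - 1, snd w) (M - {#w#}))"
        then have "w = (Suc 0, fst (snd w), 0)" "lambda0_monomial (M - {#w#})"
          using w(2) by (auto simp: prod_eq_iff)
        moreover have "M = add_mset w (M - {#w#})"
          using w(1) by simp
        ultimately show False
          using other(1) by metis
      qed
      then show ?case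
        by (simp only: lambda0_series_def if_False mult_zero_right)
    qed
    then show ?thesis
      using other(2) by simp
  qed
qed

lemma pmul_lambda0_lambda1_series:
  "pmul (lambda0_series F) (lambda1_series T) = lambda1_series (\<lambda>c. pmul F (T c))"
proof
  fix M
  show "pmul (lambda0_series F) (lambda1_series T) M = lambda1_series (\<lambda>c. pmul F (T c)) M"
  proof (cases M rule: lambda1_series_cases)
    case (lambda1 c M0)
    let ?ins = "image_mset lambda0_insertion"
    have "pmul (lambda0_series F) (lambda1_series T) M =
        (\<Sum>N\<in>{N. N \<subseteq># M0}. lambda0_series F N * lambda1_series T (M - N))"
      unfolding pmul_def
    proof (rule sum.mono_neutral_right)
      have "M0 \<subseteq># M"
        using lambda1(1) by simp
      then show "{N. N \<subseteq># M0} \<subseteq> {N. N \<subseteq># M}"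
        using subset_mset.order_trans by blast
      show "\<forall>N\<in>{N. N \<subseteq># M} - {N. N \<subseteq># M0}. lambda0_series F N * lambda1_series T (M - N) = 0"
      proof
        fix N assume "N \<in> {N. N \<subseteq># M} - {N. N \<subseteq># M0}"
        then have "N \<subseteq># add_mset (Suc 0, c, 0) M0" "\<not> N \<subseteq># M0"
          using lambda1(1) by auto
        then have "(Suc 0, c, 0) \<in># N"
          by (metis Diff_eq_empty_iff_mset minus_add_mset_if_not_in_lhs)
        then show "lambda0_series F N * lambda1_series T (M - N) = 0"
          by (auto simp: lambda0_series_def lambda0_monomial_def)
      qed
    qed (rule finite_submultisets)
    also have "\<dots> = (\<Sum>N\<in>{N. N \<subseteq># M0}. F (?ins N) * T c (?ins M0 - ?ins N))"
    proof (rule sum.cong)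
      fix N assume "N \<in> {N. N \<subseteq># M0}"
      then have N: "N \<subseteq># M0"
        by simp
      then have "lambda0_monomial N"
        using lambda1(2) lambda0_monomial_subset by blast
      moreover have "lambda0_monomial (M0 - N)"
        by (rule lambda0_monomial_subset[OF lambda1(2)]) simp
      moreover have "M - N = add_mset (Suc 0, c, 0) (M0 - N)"
        using lambda1(1) N by (metis add_mset_add_single subset_mset.add_diff_assoc2)
      ultimately show "lambda0_series F N * lambda1_series T (M - N) = F (?ins N) * T c (?ins M0 - ?ins N)"
        using N by (simp add: lambda0_series_def image_mset_Diff)
    qed simp
    also have "\<dots> = (\<Sum>K\<in>{K. K \<subseteq># ?ins M0}. F K * T c (?ins M0 - K))"
      using sum.reindex_bij_betw[OF bij_betw_image_lambda0_insertion[OF lambda1(2)]] .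
    also have "\<dots> = lambda1_series (\<lambda>c. pmul F (T c)) M"
      using lambda1 by (simp add: pmul_def)
    finally show ?thesis .
  next
    case other
    have "lambda0_series F N * lambda1_series T (M - N) = 0" if "N \<subseteq># M" for N
    proof (cases "lambda0_monomial N")
      case True
      show ?thesis
      proof (cases "M - N" rule: lambda1_series_cases)
        case (lambda1 c M1)
        then have "M = N + add_mset (Suc 0, c, 0) M1"
          using that by (metis subset_mset.add_diff_inverse)
        then have "M = add_mset (Suc 0, c, 0) (N + M1)"
          by simp
        then show ?thesis
          using other(1)[of c "N + M1"] True lambda1(2) by simp
      qed simp
    qed (simp add: lambda0_series_def)
    then show ?thesis
      using other(2) by (simp add: pmul_def sum.neutral)
  qed
qed

lemma cbracket_lambda0_series:
  "cbracket gi (lambda0_series F) (lambda0_series G) =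
     lambda1_series (\<lambda>c K. \<Sum>a\<in>UNIV. \<Sum>b\<in>UNIV. gi $ a $ b * pmul (pdb0 a F) (pdb0 c (pdb0 b G)) K)"
proof
  fix M
  have "cbracket gi (lambda0_series F) (lambda0_series G) M =
      (\<Sum>a\<in>UNIV. \<Sum>b\<in>UNIV. gi $ a $ b * lambda1_series (\<lambda>c. pmul (pdb0 a F) (pdb0 c (pdb0 b G))) M)"
    unfolding cbracket_def
    by (simp add: sum_atMost_eq_first pd_Suc_lambda0_series pd_lambda0_series
        Dz_lambda0_series pmul_lambda0_lambda1_series)
  then show "cbracket gi (lambda0_series F) (lambda0_series G) M =
      lambda1_series (\<lambda>c K. \<Sum>a\<in>UNIV. \<Sum>b\<in>UNIV. gi $ a $ b * pmul (pdb0 a F) (pdb0 c (pdb0 b G)) K) M"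
    by (simp add: mult_lambda1_series sum_lambda1_series)
qed

lemma matrix_inv_symmetric:
  fixes A :: "'a::comm_ring_1^'n^'n"
  assumes "invertible A" "transpose A = A"
  shows "transpose (matrix_inv A) = matrix_inv A"
proof -
  let ?B = "matrix_inv A"
  have AB: "A ** ?B = mat 1 \<and> ?B ** A = mat 1"
    using assms(1) unfolding invertible_def matrix_inv_def by (rule someI_ex)
  have "transpose ?B ** A = transpose (A ** ?B)"
    using assms(2) by (metis matrix_transpose_mul)
  then have left_inverse: "transpose ?B ** A = mat 1"
    using AB by (simp add: transpose_mat)
  have "transpose ?B = transpose ?B ** (A ** ?B)"
    using AB by (simp add: matrix_mul_rid)
  also have "\<dots> = ?B"
    by (simp add: matrix_mul_assoc left_inverse matrix_mul_lid)
  finally show ?thesis .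
qed

lemma metric_symmetric: "transpose (metric corr P) = metric corr P"
  by (simp add: metric_def transpose_def vec_eq_iff add_mset_commute)

lemma metric_inv_symmetric:
  assumes "invertible (metric corr P)"
  shows "metric_inv corr P $ s $ t = metric_inv corr P $ t $ s"
proof -
  have "transpose (metric_inv corr P) $ s $ t = metric_inv corr P $ s $ t"
    using matrix_inv_symmetric[OF assms metric_symmetric] by (simp add: metric_inv_def)
  then show ?thesis
    by (simp add: transpose_def)
qed

lemma cbracket_Gser_eq_Dz:
  fixes corr :: "('i::finite \<times> nat) multiset \<Rightarrow> complex"
  assumes "invertible (metric corr P)" "TRR corr P"
  shows "cbracket (metric_inv corr P) (Gser corr k a) (Gser corr m b) =
    Dz (lambda0_series (gen corr {#(a, Suc k), (b, m)#}))"
proof -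
  let ?gi = "metric_inv corr P"
  let ?X = "\<lambda>c K t s. pmul (gen corr {#(a, k), (t, 0)#}) (gen corr {#(s, 0), (b, m), (c, 0)#}) K"
  have trr: "(\<Sum>t\<in>UNIV. \<Sum>s\<in>UNIV. ?gi $ t $ s *
        pmul (gen corr {#(t, 0), (a, k)#}) (gen corr {#(c, 0), (s, 0), (b, m)#}) K) =
      gen corr {#(c, 0), (a, Suc k), (b, m)#} K" for c K
  proof -
    have "gen corr {#(a, Suc k), (b, m), (c, 0)#} K = (\<Sum>s\<in>UNIV. \<Sum>t\<in>UNIV. ?gi $ s $ t * ?X c K t s)"
      using assms(2) unfolding TRR_def by blast
    also have "\<dots> = (\<Sum>s\<in>UNIV. \<Sum>t\<in>UNIV. ?gi $ t $ s * ?X c K t s)"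
      using metric_inv_symmetric[OF assms(1)] by simp
    also have "\<dots> = (\<Sum>t\<in>UNIV. \<Sum>s\<in>UNIV. ?gi $ t $ s * ?X c K t s)"
      by (rule sum.swap)
    finally show ?thesis
      by (simp add: add_mset_commute)
  qed
  have "cbracket ?gi (Gser corr k a) (Gser corr m b) =
      lambda1_series (\<lambda>c. gen corr {#(c, 0), (a, Suc k), (b, m)#})"
    by (simp add: Gser_eq_lambda0_series cbracket_lambda0_series pdb0_gen trr)
  also have "\<dots> = Dz (lambda0_series (gen corr {#(a, Suc k), (b, m)#}))"
    by (simp add: Dz_lambda0_series pdb0_gen)
  finally show ?thesis .
qed

theorem mainTheorem8:
  fixes corr :: "('i::finite \<times> nat) multiset \<Rightarrow> complex" and P :: 'i
    and k m :: nat and a b :: 'i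
  assumes "\<forall>X. size X < 3 \<longrightarrow> corr X = 0"
    and "invertible (metric corr P)"
    and "TRR corr P"
  shows "current_vanishes (cbracket (metric_inv corr P) (Gser corr k a) (Gser corr m b))"
  using cbracket_Gser_eq_Dz[OF assms(2,3)] unfolding current_vanishes_def by blast

end
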